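(* With the notation of the context, for every $\lambda\in[0,1]$ the state transition matrix $\Phi(\lambda,0)=\exp\!\big(\int_0^\lambda A(\mu)\,d\mu\big)$ of the EDH flow matrix satisfies $$\Phi(\lambda,0)=I+PH^\top R^{-1/2}\big[(I+\lambda D)^{-1/2}-I\big]D^{-1}R^{-1/2}H=I+E\,\Omega(\lambda)\,F^\top,$$ where $\Omega(\lambda)=\mathrm{diag}(\omega_1(\lambda),\dots,\omega_{n_z}(\lambda))$, $\omega_i(\lambda)=\dfrac{(1+\lambda\alpha_i)^{-1/2}-1}{\alpha_i}$.
   Context: $P\in\mathbb{R}^{n_x\times n_x}$, $R\in\mathbb{R}^{n_z\times n_z}$ symmetric positive definite, $H\in\mathbb{R}^{n_z\times n_x}$ of full row rank. $R^{-1/2}$ is the inverse of the symmetric positive definite square root of $R$. The EDH flow matrix is $A(\lambda)=-\tfrac12 PH^\top(\lambda HPH^\top+R)^{-1}H$ for $\lambda\in[0,1]$. Let $D=R^{-1/2}HPH^\top R^{-1/2}=V\Lambda V^\top$ with $V$ orthogonal and $\Lambda=\mathrm{diag}(\alpha_1,\dots,\alpha_{n_z})$, $\alpha_i>0$. Define $E=PH^\top R^{-1/2}V$ and $F^\top=V^\top R^{-1/2}H$. $(I+\lambda D)^{-1/2}$ denotes the inverse of the symmetric positive definite square root of $I+\lambda D$. *)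

theory Defs
  imports "HOL-Analysis.Analysis"
begin

text \<open>Matrix powers and the matrix exponential (the product on real^n^n in the
library is componentwise, so the exponential is defined explicitly via the matrix product).\<close>
primrec mpow :: "real^'n^'n \<Rightarrow> nat \<Rightarrow> real^'n^'n" where
  "mpow M 0 = mat 1"
| "mpow M (Suc k) = M ** mpow M k"

definition mat_exp :: "real^'n^'n \<Rightarrow> real^'n^'n" where
  "mat_exp M = (\<Sum>k. (1 / fact k) *\<^sub>R mpow M k)"

definition pos_def_matrix :: "real^'n^'n \<Rightarrow> bool" where
  "pos_def_matrix M \<longleftrightarrow> transpose M = M \<and> (\<forall>x. x \<noteq> 0 \<longrightarrow> x \<bullet> (M *v x) > 0)"

definition spd_sqrt :: "real^'n^'n \<Rightarrow> real^'n^'n" where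
  "spd_sqrt M = (THE S. pos_def_matrix S \<and> S ** S = M)"

definition diag_mat :: "('n \<Rightarrow> real) \<Rightarrow> real^'n^'n" where
  "diag_mat a = (\<chi> i j. if i = j then a i else 0)"

definition edh_A :: "real^'x^'x \<Rightarrow> real^'x^'z \<Rightarrow> real^'z^'z \<Rightarrow> real \<Rightarrow> real^'x^'x" where
  "edh_A P H R lam = - ((1/2) *\<^sub>R (P ** transpose H ** matrix_inv (lam *\<^sub>R (H ** P ** transpose H) + R) ** H))"

definition edh_Phi :: "real^'x^'x \<Rightarrow> real^'x^'z \<Rightarrow> real^'z^'z \<Rightarrow> real \<Rightarrow> real^'x^'x" where
  "edh_Phi P H R lam = mat_exp (integral {0..lam} (\<lambda>mu. edh_A P H R mu))"

end

(* Write S = R^(1/2). Then lambda H P H^T + R = S (I + lambda D) S with D = V Lambda V^T, so the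
   flow matrix is A(mu) = E diag(-1 / (2 (1 + mu alpha_i))) F^T, and its integral over [0, lambda]
   is E Gamma F^T with gamma_i = -ln(1 + lambda alpha_i) / (2 alpha_i). Since F^T E = Lambda is
   diagonal, (E Gamma F^T)^(k+1) = E Gamma (Lambda Gamma)^k F^T, so the exponential series sums
   diagonal entry by diagonal entry to I + E diag((exp(gamma_i alpha_i) - 1) / alpha_i) F^T, and
   exp(gamma_i alpha_i) = (1 + lambda alpha_i)^(-1/2). Reading this diagonal matrix back through V
   gives the first form. The existence of S rests on the spectral theorem for symmetric matrices,
   obtained by maximising the Rayleigh quotient on invariant subspaces. *)

theory Submission
  imports Defs
begin

lemma matrix_add_rdistrib: "((A::real^'m^'n) + B) ** C = A ** C + B ** C"
  by (simp add: matrix_matrix_mult_def vec_eq_iff sum.distrib distrib_right)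

lemma matrix_diff_ldistrib: "(A::real^'m^'n) ** (B - C) = A ** B - A ** C"
  by (simp add: matrix_matrix_mult_def vec_eq_iff sum_subtractf right_diff_distrib)

lemma matrix_diff_rdistrib: "((A::real^'m^'n) - B) ** C = A ** C - B ** C"
  by (simp add: matrix_matrix_mult_def vec_eq_iff sum_subtractf left_diff_distrib)

lemma matrix_scaleR_right: "(A::real^'m^'n) ** (k *\<^sub>R B) = k *\<^sub>R (A ** B)"
  by (simp add: matrix_scalar_ac scalar_matrix_assoc)

lemma matrix_sum_left: "(\<Sum>i\<in>I. f i :: real^'m^'n) ** B = (\<Sum>i\<in>I. f i ** B)"
  by (induction I rule: infinite_finite_induct) (simp_all add: matrix_add_rdistrib)

lemma matrix_sum_right: "(A::real^'m^'n) ** (\<Sum>i\<in>I. f i) = (\<Sum>i\<in>I. A ** f i)"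
  by (induction I rule: infinite_finite_induct) (simp_all add: matrix_add_ldistrib)

lemma matrix_inv_unique:
  fixes A B :: "real^'n^'n"
  assumes AB: "A ** B = mat 1"
  shows "matrix_inv A = B"
proof -
  have "B ** A = mat 1" using AB matrix_left_right_inverse by blast
  then have "\<exists>A'. A ** A' = mat 1 \<and> A' ** A = mat 1" using AB by blast
  then have "matrix_inv A ** A = mat 1"
    unfolding matrix_inv_def by (rule someI_ex[THEN conjunct2])
  then have "matrix_inv A ** (A ** B) = B" by (simp add: matrix_mul_assoc)
  then show ?thesis using AB by simp
qed

lemma diag_mat_mult: "diag_mat a ** diag_mat b = diag_mat (\<lambda>i. a i * b i)"
  by (auto simp: diag_mat_def matrix_matrix_mult_def vec_eq_iff mult_delta_left mult_delta_right)

lemma diag_mat_one: "diag_mat (\<lambda>_. 1) = mat 1"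
  by (simp add: diag_mat_def mat_def)

lemma diag_mat_add: "diag_mat a + diag_mat b = diag_mat (\<lambda>i. a i + b i)"
  by (simp add: vec_eq_iff diag_mat_def)

lemma diag_mat_diff: "diag_mat a - diag_mat b = diag_mat (\<lambda>i. a i - b i)"
  by (simp add: vec_eq_iff diag_mat_def)

lemma scaleR_diag_mat: "k *\<^sub>R diag_mat a = diag_mat (\<lambda>i. k * a i)"
  by (simp add: vec_eq_iff diag_mat_def)

lemma transpose_diag_mat: "transpose (diag_mat a) = diag_mat a"
  by (simp add: vec_eq_iff diag_mat_def transpose_def)

lemma diag_mat_quadratic_form: "x \<bullet> (diag_mat f *v x) = (\<Sum>i\<in>UNIV. f i * (x$i)\<^sup>2)"
  by (simp add: inner_vec_def matrix_vector_mult_def diag_mat_def if_distrib if_distribR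
      sum.delta power2_eq_square mult_ac cong: if_cong)

lemma factored_diag_mat_expand:
  "(E::real^'k^'m) ** diag_mat g ** (F::real^'n^'k)
     = (\<Sum>i\<in>UNIV. g i *\<^sub>R (E ** diag_mat (\<lambda>j. if j = i then 1 else 0) ** F))"
proof -
  have "diag_mat g = (\<Sum>i\<in>UNIV. g i *\<^sub>R diag_mat (\<lambda>j. if j = i then 1 else 0))"
    by (auto simp: diag_mat_def vec_eq_iff sum_component mult_delta_right)
  then show ?thesis
    by (simp add: matrix_sum_left matrix_sum_right matrix_scaleR_right scalar_matrix_assoc)
qed

lemma sums_factored_diag_mat:
  assumes "\<And>i. (\<lambda>k. g k i) sums h i"
  shows "(\<lambda>k. (E::real^'k^'m) ** diag_mat (g k) ** (F::real^'n^'k)) sums (E ** diag_mat h ** F)"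
proof -
  have "(\<lambda>k. \<Sum>i\<in>UNIV. g k i *\<^sub>R (E ** diag_mat (\<lambda>j. if j = i then 1 else 0) ** F))
      sums (\<Sum>i\<in>UNIV. h i *\<^sub>R (E ** diag_mat (\<lambda>j. if j = i then 1 else 0) ** F))"
    by (intro sums_sum sums_scaleR_left assms)
  then show ?thesis by (simp only: factored_diag_mat_expand[symmetric])
qed

lemma has_integral_factored_diag_mat:
  assumes "\<And>i. ((\<lambda>t. g t i) has_integral h i) S"
  shows "((\<lambda>t. (E::real^'k^'m) ** diag_mat (g t) ** (F::real^'n^'k)) has_integral
           (E ** diag_mat h ** F)) S"
proof -
  have "((\<lambda>t. \<Sum>i\<in>UNIV. g t i *\<^sub>R (E ** diag_mat (\<lambda>j. if j = i then 1 else 0) ** F))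
      has_integral (\<Sum>i\<in>UNIV. h i *\<^sub>R (E ** diag_mat (\<lambda>j. if j = i then 1 else 0) ** F))) S"
    by (intro has_integral_sum has_integral_scaleR_left assms) simp
  then show ?thesis by (simp only: factored_diag_mat_expand[symmetric])
qed

definition orth_diag :: "real^'n^'n \<Rightarrow> ('n \<Rightarrow> real) \<Rightarrow> real^'n^'n" where
  "orth_diag V f = V ** diag_mat f ** transpose V"

lemma orth_diag_mult:
  assumes "orthogonal_matrix V"
  shows "orth_diag V f ** orth_diag V g = orth_diag V (\<lambda>i. f i * g i)"
proof -
  have "orth_diag V f ** orth_diag V g
      = V ** (diag_mat f ** ((transpose V ** V) ** (diag_mat g ** transpose V)))"
    unfolding orth_diag_def by (simp only: matrix_mul_assoc)
  also have "\<dots> = V ** (diag_mat f ** diag_mat g) ** transpose V"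
    using assms by (simp add: orthogonal_matrix_def matrix_mul_assoc)
  finally show ?thesis unfolding orth_diag_def diag_mat_mult .
qed

lemma orth_diag_one:
  assumes "orthogonal_matrix V"
  shows "orth_diag V (\<lambda>_. 1) = mat 1"
  using assms by (simp add: orth_diag_def diag_mat_one orthogonal_matrix_def)

lemma orth_diag_add: "orth_diag V f + orth_diag V g = orth_diag V (\<lambda>i. f i + g i)"
  by (simp add: orth_diag_def matrix_add_ldistrib matrix_add_rdistrib diag_mat_add[symmetric])

lemma orth_diag_diff: "orth_diag V f - orth_diag V g = orth_diag V (\<lambda>i. f i - g i)"
  by (simp add: orth_diag_def matrix_diff_ldistrib matrix_diff_rdistrib diag_mat_diff[symmetric])

lemma scaleR_orth_diag: "k *\<^sub>R orth_diag V f = orth_diag V (\<lambda>i. k * f i)"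
  by (simp add: orth_diag_def matrix_scaleR_right scalar_matrix_assoc[symmetric]
      scaleR_diag_mat[symmetric])

lemma matrix_inv_orth_diag:
  assumes "orthogonal_matrix V" and "\<And>i. f i \<noteq> 0"
  shows "matrix_inv (orth_diag V f) = orth_diag V (\<lambda>i. 1 / f i)"
  using assms by (intro matrix_inv_unique) (simp add: orth_diag_mult orth_diag_one)

lemma orth_diag_quadratic_form:
  "x \<bullet> (orth_diag V f *v x) = (\<Sum>i\<in>UNIV. f i * ((transpose V *v x)$i)\<^sup>2)"
proof -
  have "x \<bullet> (orth_diag V f *v x) = (transpose V *v x) \<bullet> (diag_mat f *v (transpose V *v x))"
    by (simp only: orth_diag_def matrix_vector_mul_assoc[symmetric] transpose_matrix_vector
        dot_lmul_matrix)
  then show ?thesis by (simp add: diag_mat_quadratic_form)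
qed

lemma pos_def_orth_diag_iff:
  assumes V: "orthogonal_matrix V"
  shows "pos_def_matrix (orth_diag V f) \<longleftrightarrow> (\<forall>i. f i > 0)"
proof
  assume pd: "pos_def_matrix (orth_diag V f)"
  show "\<forall>i. f i > 0"
  proof
    fix i
    have "transpose V *v (V *v axis i 1) = axis i 1"
      using V by (simp add: orthogonal_matrix_def matrix_vector_mul_assoc)
    moreover have "V *v axis i 1 \<noteq> 0"
      using calculation by (metis axis_eq_0_iff matrix_vector_mult_0_right zero_neq_one)
    ultimately show "f i > 0"
      using pd unfolding pos_def_matrix_def orth_diag_quadratic_form
      by (auto simp: axis_def if_distrib if_distribR cong: if_cong)
  qed
next
  assume f: "\<forall>i. f i > 0"
  have "transpose (orth_diag V f) = orth_diag V f"
    by (simp add: orth_diag_def matrix_transpose_mul transpose_diag_mat matrix_mul_assoc)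
  moreover have "x \<bullet> (orth_diag V f *v x) > 0" if "x \<noteq> 0" for x
  proof -
    have "transpose V *v x \<noteq> 0"
      using that V by (metis matrix_vector_mul_assoc matrix_vector_mul_lid
          matrix_vector_mult_0_right orthogonal_matrix_def)
    then obtain i where "(transpose V *v x) $ i \<noteq> 0" by (auto simp: vec_eq_iff)
    then show ?thesis
      unfolding orth_diag_quadratic_form using f
      by (intro sum_pos2[of UNIV i]) (simp_all add: less_imp_le)
  qed
  ultimately show "pos_def_matrix (orth_diag V f)" by (simp add: pos_def_matrix_def)
qed

section \<open>The spectral theorem for real symmetric matrices\<close>

lemma symmetric_matrix_inner_commute:
  fixes A :: "real^'n^'n"
  assumes "transpose A = A"
  shows "x \<bullet> (A *v y) = (A *v x) \<bullet> y"
  by (metis assms dot_lmul_matrix transpose_matrix_vector)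

lemma linear_coeff_eq_0_if_quadratic_nonpos:
  fixes c d :: real
  assumes "\<And>t. 2 * t * c + t\<^sup>2 * d \<le> 0"
  shows "c = 0"
proof -
  define e where "e = \<bar>d\<bar> + 1"
  have e: "e > 0" "2 * e + d > 0" unfolding e_def by auto
  have "e\<^sup>2 * (2 * (c / e) * c + (c / e)\<^sup>2 * d) \<le> 0"
    using assms[of "c / e"] by (intro mult_nonneg_nonpos) simp_all
  moreover have "e\<^sup>2 * (2 * (c / e) * c + (c / e)\<^sup>2 * d) = c\<^sup>2 * (2 * e + d)"
    using e by (simp add: field_simps power2_eq_square)
  ultimately have "c\<^sup>2 * (2 * e + d) \<le> 0" by simp
  then show ?thesis using e(2) by (simp add: mult_le_0_iff)
qed

text \<open>A maximiser of the Rayleigh quotient on the unit sphere of W is an eigenvector.\<close>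

lemma symmetric_matrix_eigenvector_in_invariant_subspace:
  fixes A :: "real^'n^'n"
  assumes sym: "transpose A = A" and W: "subspace W" and "W \<noteq> {0}"
    and inv: "\<And>x. x \<in> W \<Longrightarrow> A *v x \<in> W"
  obtains v c where "v \<in> W" "norm v = 1" "A *v v = c *\<^sub>R v"
proof -
  define K where "K = sphere 0 1 \<inter> W"
  have "compact K" unfolding K_def by (intro compact_Int_closed compact_sphere closed_subspace W)
  obtain w where w: "w \<in> W" "w \<noteq> 0" using \<open>W \<noteq> {0}\<close> W subspace_0 by blast
  then have "w /\<^sub>R norm w \<in> K" unfolding K_def using W by (simp add: subspace_scale)
  then have "K \<noteq> {}" by blast
  moreover have "continuous_on K (\<lambda>x. x \<bullet> (A *v x))"
    by (intro continuous_intros continuous_on_compose2[OF linear_continuous_on]) auto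
  ultimately obtain v where v: "v \<in> K" and vmax: "\<And>y. y \<in> K \<Longrightarrow> y \<bullet> (A *v y) \<le> v \<bullet> (A *v v)"
    using continuous_attains_sup[OF \<open>compact K\<close>] by blast
  define m where "m = v \<bullet> (A *v v)"
  have vW: "v \<in> W" and nv: "norm v = 1" using v unfolding K_def by auto
  have vv: "v \<bullet> v = 1" using nv by (simp add: norm_eq_1)
  have bound: "x \<bullet> (A *v x) \<le> m * (x \<bullet> x)" if "x \<in> W" for x
  proof (cases "x = 0")
    case False
    have "x /\<^sub>R norm x \<in> K" unfolding K_def using \<open>x \<in> W\<close> W False by (simp add: subspace_scale)
    then have "(x /\<^sub>R norm x) \<bullet> (A *v (x /\<^sub>R norm x)) \<le> m" using vmax m_def by blast
    then have "(x \<bullet> (A *v x)) / (norm x)\<^sup>2 \<le> m"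
      by (simp add: matrix_vector_mult_scaleR power2_eq_square divide_inverse mult_ac)
    then show ?thesis using False by (simp add: divide_le_eq dot_square_norm)
  qed simp
  have orth: "v \<bullet> (A *v w) = 0" if "w \<in> W" "v \<bullet> w = 0" for w
  proof (rule linear_coeff_eq_0_if_quadratic_nonpos)
    fix t :: real
    have "v + t *\<^sub>R w \<in> W" using W vW \<open>w \<in> W\<close> by (simp add: subspace_add subspace_scale)
    then have "(v + t *\<^sub>R w) \<bullet> (A *v (v + t *\<^sub>R w)) \<le> m * ((v + t *\<^sub>R w) \<bullet> (v + t *\<^sub>R w))"
      by (rule bound)
    moreover have "w \<bullet> (A *v v) = v \<bullet> (A *v w)"
      using symmetric_matrix_inner_commute[OF sym, of w v] by (simp add: inner_commute)
    ultimately show "2 * t * (v \<bullet> (A *v w)) + t\<^sup>2 * (w \<bullet> (A *v w) - m * (w \<bullet> w)) \<le> 0"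
      using \<open>v \<bullet> w = 0\<close> vv unfolding m_def
      by (simp add: matrix_vector_right_distrib matrix_vector_mult_scaleR inner_add_left
          inner_add_right inner_commute power2_eq_square algebra_simps)
  qed
  define u where "u = A *v v - m *\<^sub>R v"
  have "u \<in> W" unfolding u_def using W vW inv by (simp add: subspace_diff subspace_scale)
  moreover have vu: "v \<bullet> u = 0" unfolding u_def m_def using vv by (simp add: inner_diff_right)
  ultimately have "v \<bullet> (A *v u) = 0" by (rule orth)
  then have "u \<bullet> u = 0"
    using vu symmetric_matrix_inner_commute[OF sym, of u v]
    by (simp add: u_def inner_diff_left inner_diff_right inner_commute)
  then have "A *v v = m *\<^sub>R v" unfolding u_def by simp
  then show ?thesis using that vW nv by blast
qed

lemma symmetric_matrix_orthonormal_eigenbasis: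
  fixes A :: "real^'n^'n"
  assumes sym: "transpose A = A"
  shows "subspace W \<Longrightarrow> (\<And>x. x \<in> W \<Longrightarrow> A *v x \<in> W) \<Longrightarrow>
    \<exists>B. B \<subseteq> W \<and> pairwise orthogonal B \<and> (\<forall>b\<in>B. norm b = 1 \<and> (\<exists>c. A *v b = c *\<^sub>R b))
      \<and> span B = W"
proof (induction "dim W" arbitrary: W rule: less_induct)
  case less
  show ?case
  proof (cases "W = {0}")
    case True
    then show ?thesis by (intro exI[of _ "{}"]) auto
  next
    case False
    obtain v m where vW: "v \<in> W" and nv: "norm v = 1" and ev: "A *v v = m *\<^sub>R v"
      using symmetric_matrix_eigenvector_in_invariant_subspace[OF sym less.prems(1) False less.prems(2)]
      by blast
    have vv: "v \<bullet> v = 1" using nv by (simp add: norm_eq_1)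
    define W' where "W' = W \<inter> {x. v \<bullet> x = 0}"
    have sW': "subspace W'" unfolding W'_def
      by (rule subspace_inter[OF less.prems(1) subspace_hyperplane])
    have iW': "A *v x \<in> W'" if "x \<in> W'" for x
    proof -
      have "v \<bullet> (A *v x) = m * (v \<bullet> x)"
        by (simp add: symmetric_matrix_inner_commute[OF sym] ev)
      then show ?thesis using that less.prems(2) unfolding W'_def by auto
    qed
    have "v \<notin> W'" using vv unfolding W'_def by simp
    then have "W' \<subset> W" using vW unfolding W'_def by blast
    then have "dim W' < dim W" using sW' less.prems(1) by (metis dim_psubset span_eq_iff)
    then obtain B' where B': "B' \<subseteq> W'" "pairwise orthogonal B'"
      "\<forall>b\<in>B'. norm b = 1 \<and> (\<exists>c. A *v b = c *\<^sub>R b)" "span B' = W'"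
      using less.hyps[OF _ sW' iW'] by blast
    have "W \<subseteq> span (insert v B')"
    proof
      fix x assume "x \<in> W"
      then have "x - (v \<bullet> x) *\<^sub>R v \<in> span B'" unfolding B'(4) W'_def using vW vv less.prems(1)
        by (simp add: subspace_diff subspace_scale inner_diff_right)
      then have "(x - (v \<bullet> x) *\<^sub>R v) + (v \<bullet> x) *\<^sub>R v \<in> span (insert v B')"
        by (meson span_add span_base span_mono span_scale insertI1 subset_insertI subsetD)
      then show "x \<in> span (insert v B')" by simp
    qed
    moreover have "span (insert v B') \<subseteq> W"
      using B'(1) vW less.prems(1) unfolding W'_def by (intro span_minimal) auto
    moreover have "pairwise orthogonal (insert v B')"
      using B'(1,2) unfolding W'_def pairwise_insert orthogonal_def
      by (auto simp: inner_commute)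
    moreover have "insert v B' \<subseteq> W" using B'(1) vW unfolding W'_def by blast
    ultimately show ?thesis using B'(3) nv ev by (intro exI[of _ "insert v B'"]) auto
  qed
qed

theorem symmetric_matrix_orth_diagonalizable:
  fixes A :: "real^'n^'n"
  assumes "transpose A = A"
  obtains V f where "orthogonal_matrix V" "A = orth_diag V f"
proof -
  obtain B where orthB: "pairwise orthogonal B" and spanB: "span B = UNIV"
    and eigB: "\<forall>b\<in>B. norm b = 1 \<and> (\<exists>c. A *v b = c *\<^sub>R b)"
    using symmetric_matrix_orthonormal_eigenbasis[OF assms, of UNIV] by auto
  have "independent B"
    using orthB eigB by (metis norm_zero pairwise_orthogonal_independent zero_neq_one)
  then have "card B = CARD('n)"
    using spanB by (simp add: indep_card_eq_dim_span)
  moreover have "finite B" using \<open>independent B\<close> by (rule independent_imp_finite)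
  ultimately obtain \<beta> where \<beta>: "bij_betw \<beta> (UNIV :: 'n set) B"
    using finite_same_card_bij[of "UNIV :: 'n set" B] by auto
  then have \<beta>B: "\<beta> j \<in> B" for j by (simp add: bij_betw_apply)
  define V where "V = (\<chi> i j. \<beta> j $ i)"
  define f where "f j = \<beta> j \<bullet> (A *v \<beta> j)" for j
  have eig: "A *v \<beta> j = f j *\<^sub>R \<beta> j" for j
  proof -
    obtain c where "A *v \<beta> j = c *\<^sub>R \<beta> j" and "\<beta> j \<bullet> \<beta> j = 1"
      using eigB \<beta>B by (metis norm_eq_1)
    then show ?thesis by (simp add: f_def)
  qed
  have "orthogonal (\<beta> i) (\<beta> j)" if "i \<noteq> j" for i j
  proof -
    have "\<beta> i \<noteq> \<beta> j" using inj_onD[OF bij_betw_imp_inj_on[OF \<beta>]] that by blast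
    then show ?thesis using orthB \<beta>B unfolding pairwise_def by blast
  qed
  then have V: "orthogonal_matrix V"
    using eigB \<beta>B by (simp add: orthogonal_matrix_orthonormal_columns column_def V_def)
  have "A ** V = V ** diag_mat f"
  proof -
    have "(A ** V) $ i $ j = (A *v \<beta> j) $ i" for i j
      by (simp add: V_def matrix_matrix_mult_def matrix_vector_mult_def)
    moreover have "(V ** diag_mat f) $ i $ j = f j * \<beta> j $ i" for i j
      by (simp add: V_def diag_mat_def matrix_matrix_mult_def mult_delta_right)
    ultimately show ?thesis by (simp add: vec_eq_iff eig)
  qed
  then have "A = orth_diag V f"
    using V by (metis matrix_mul_assoc matrix_mul_rid orth_diag_def orthogonal_matrix_def)
  with V that show ?thesis by blast
qed

section \<open>Positive definite square roots\<close>

lemma pos_def_matrix_inverse: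
  fixes S :: "real^'n^'n"
  assumes "pos_def_matrix S"
  shows "S ** matrix_inv S = mat 1" "matrix_inv S ** S = mat 1"
proof -
  have "inj ((*v) S)"
  proof (rule injI)
    fix x y assume "S *v x = S *v y"
    then have "(x - y) \<bullet> (S *v (x - y)) = 0" by (simp add: matrix_vector_mult_diff_distrib)
    then show "x = y" using assms unfolding pos_def_matrix_def by (metis eq_iff_diff_eq_0 less_irrefl)
  qed
  then obtain B where "B ** S = mat 1" using matrix_left_invertible_injective by blast
  then have "S ** B = mat 1" using matrix_left_right_inverse by blast
  then show "S ** matrix_inv S = mat 1" "matrix_inv S ** S = mat 1"
    using \<open>B ** S = mat 1\<close> by (simp_all add: matrix_inv_unique)
qed

lemma trace_transpose_mult_mult:
  fixes X Y :: "real^'n^'n"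
  shows "trace (transpose X ** Y ** X) = (\<Sum>i\<in>UNIV. column i X \<bullet> (Y *v column i X))"
  unfolding trace_def
  apply (simp add: matrix_matrix_mult_def matrix_vector_mult_def inner_vec_def column_def
      transpose_def sum_distrib_left sum_distrib_right mult_ac)
  apply (rule sum.cong[OF refl])
  apply (subst sum.swap)
  apply (simp add: mult_ac)
  done

text \<open>For \<open>X = S - T\<close> and \<open>Y = S + T\<close> one has \<open>X Y = - Y X\<close>, so
  \<open>tr (X Y X) = - tr (Y X X) = - tr (X Y X)\<close> vanishes; as \<open>Y\<close> is positive definite this forces \<open>X = 0\<close>.\<close>

lemma pos_def_matrix_sqrt_unique:
  fixes S T :: "real^'n^'n"
  assumes S: "pos_def_matrix S" and T: "pos_def_matrix T" and eq: "S ** S = T ** T"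
  shows "S = T"
proof -
  define X where "X = S - T"
  define Y where "Y = S + T"
  have Y: "x \<noteq> 0 \<Longrightarrow> x \<bullet> (Y *v x) > 0" for x
    using S T unfolding pos_def_matrix_def Y_def
    by (simp add: matrix_vector_mult_add_rdistrib inner_add_right add_pos_pos)
  have "X ** Y + Y ** X = 2 *\<^sub>R (S ** S - T ** T)"
    unfolding X_def Y_def
    by (simp add: matrix_add_ldistrib matrix_add_rdistrib matrix_diff_ldistrib
        matrix_diff_rdistrib scaleR_2)
  then have "trace ((X ** Y + Y ** X) ** X) = 0" using eq by (simp add: trace_def)
  then have "trace (X ** Y ** X) + trace (Y ** X ** X) = 0"
    by (simp add: matrix_add_rdistrib trace_add)
  moreover have "trace (Y ** X ** X) = trace (X ** Y ** X)"
    by (metis matrix_mul_assoc trace_mul_sym)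
  moreover have "transpose X = X"
    using S T unfolding X_def pos_def_matrix_def by (simp add: transpose_def vec_eq_iff)
  ultimately have "trace (transpose X ** Y ** X) = 0" by simp
  then have "(\<Sum>i\<in>UNIV. column i X \<bullet> (Y *v column i X)) = 0"
    by (simp add: trace_transpose_mult_mult)
  then have "column i X \<bullet> (Y *v column i X) = 0" for i
  proof -
    have "x \<bullet> (Y *v x) \<ge> 0" for x using Y[of x] by (cases "x = 0") auto
    then show ?thesis using \<open>(\<Sum>i\<in>UNIV. _) = 0\<close> by (simp add: sum_nonneg_eq_0_iff)
  qed
  then have "column i X = 0" for i using Y by (metis less_irrefl)
  then show ?thesis by (simp add: X_def vec_eq_iff column_def)
qed

lemma spd_sqrt_eqI:
  assumes "pos_def_matrix S" and "S ** S = M"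
  shows "spd_sqrt M = S"
  unfolding spd_sqrt_def using assms pos_def_matrix_sqrt_unique by blast

lemma spd_sqrt_orth_diag:
  assumes V: "orthogonal_matrix V" and "\<And>i. f i > 0"
  shows "spd_sqrt (orth_diag V f) = orth_diag V (\<lambda>i. sqrt (f i))"
  using assms by (intro spd_sqrt_eqI)
    (simp_all add: pos_def_orth_diag_iff orth_diag_mult less_imp_le)

lemma
  assumes "pos_def_matrix R"
  shows pos_def_spd_sqrt: "pos_def_matrix (spd_sqrt R)"
    and spd_sqrt_mult_self: "spd_sqrt R ** spd_sqrt R = R"
proof -
  obtain V f where V: "orthogonal_matrix V" and R: "R = orth_diag V f"
    using symmetric_matrix_orth_diagonalizable assms unfolding pos_def_matrix_def by metis
  then have "f i > 0" for i using assms pos_def_orth_diag_iff by blast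
  then show "pos_def_matrix (spd_sqrt R)" "spd_sqrt R ** spd_sqrt R = R"
    using V by (simp_all add: R spd_sqrt_orth_diag pos_def_orth_diag_iff orth_diag_mult less_imp_le)
qed

section \<open>Exponentials of matrices of the form E C F with F E diagonal\<close>

lemma scaleR_factored_diag_mat:
  "k *\<^sub>R ((E::real^'k^'m) ** diag_mat g ** (F::real^'n^'k)) = E ** diag_mat (\<lambda>i. k * g i) ** F"
  by (simp only: scaleR_diag_mat[symmetric] matrix_scaleR_right scalar_matrix_assoc[symmetric])

lemma mpow_factored_Suc:
  fixes E :: "real^'k^'n" and F :: "real^'n^'k"
  assumes FE: "F ** E = diag_mat a"
  shows "mpow (E ** diag_mat c ** F) (Suc k) = E ** diag_mat (\<lambda>i. c i * (c i * a i) ^ k) ** F"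
proof (induction k)
  case 0
  show ?case by simp
next
  case (Suc k)
  have "mpow (E ** diag_mat c ** F) (Suc (Suc k))
      = E ** (diag_mat c ** diag_mat a ** diag_mat (\<lambda>i. c i * (c i * a i) ^ k)) ** F"
    by (simp only: mpow.simps(2)[of _ "Suc k"] Suc.IH FE[symmetric] matrix_mul_assoc)
  also have "\<dots> = E ** diag_mat (\<lambda>i. c i * (c i * a i) ^ Suc k) ** F"
    by (simp add: diag_mat_mult mult_ac)
  finally show ?case .
qed

lemma exp_minus_one_sums: "(\<lambda>n. x ^ Suc n / fact (Suc n)) sums (exp x - 1 :: real)"
proof -
  have "(\<lambda>n. x ^ n / fact n) sums (exp x - 1 + 1)"
    using exp_converges[of x] by (simp add: divide_inverse mult.commute)
  then show ?thesis using sums_Suc_iff[of "\<lambda>n. x ^ n / fact n" "exp x - 1"] by simp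
qed

theorem mat_exp_factored:
  fixes E :: "real^'k^'n" and F :: "real^'n^'k"
  assumes FE: "F ** E = diag_mat a" and a: "\<And>i. a i \<noteq> 0"
  shows "mat_exp (E ** diag_mat c ** F)
           = mat 1 + E ** diag_mat (\<lambda>i. (exp (c i * a i) - 1) / a i) ** F"
proof -
  define M where "M = E ** diag_mat c ** F"
  have "(1 / fact (Suc n)) *\<^sub>R mpow M (Suc n)
      = E ** diag_mat (\<lambda>i. (c i * a i) ^ Suc n / fact (Suc n) / a i) ** F" for n
  proof -
    have "(c i * a i) ^ Suc n / fact (Suc n) / a i = (1 / fact (Suc n)) * (c i * (c i * a i) ^ n)"
      for i using a[of i] by (simp del: fact_Suc)
    then show ?thesis unfolding M_def mpow_factored_Suc[OF FE] scaleR_factored_diag_mat by simp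
  qed
  moreover have "(\<lambda>n. E ** diag_mat (\<lambda>i. (c i * a i) ^ Suc n / fact (Suc n) / a i) ** F)
      sums (E ** diag_mat (\<lambda>i. (exp (c i * a i) - 1) / a i) ** F)"
    by (intro sums_factored_diag_mat sums_divide exp_minus_one_sums)
  ultimately have "(\<lambda>n. (1 / fact (Suc n)) *\<^sub>R mpow M (Suc n))
      sums (E ** diag_mat (\<lambda>i. (exp (c i * a i) - 1) / a i) ** F)"
    by (simp only:)
  then have "(\<lambda>n. (1 / fact n) *\<^sub>R mpow M n)
      sums (E ** diag_mat (\<lambda>i. (exp (c i * a i) - 1) / a i) ** F + mat 1)"
    by (subst (asm) sums_Suc_iff) simp
  then show ?thesis
    unfolding mat_exp_def M_def[symmetric] by (simp add: sums_unique[symmetric] add.commute)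
qed

lemma has_integral_edh_coefficient:
  fixes a lam :: real
  assumes a: "a > 0" and lam: "lam \<ge> 0"
  shows "((\<lambda>t. - 1 / (2 * (1 + t * a))) has_integral - ln (1 + lam * a) / (2 * a)) {0..lam}"
proof -
  have "((\<lambda>t. - ln (1 + t * a) / (2 * a)) has_real_derivative - 1 / (2 * (1 + t * a))) (at t)"
    if "t \<in> {0..lam}" for t
  proof -
    have "1 + t * a > 0" using that a by (simp add: add_pos_nonneg)
    then show ?thesis using a by (auto intro!: derivative_eq_intros simp: divide_simps)
  qed
  then have "((\<lambda>t. - 1 / (2 * (1 + t * a))) has_integral
      (- ln (1 + lam * a) / (2 * a) - - ln (1 + 0 * a) / (2 * a))) {0..lam}"
    using lam by (intro fundamental_theorem_of_calculus)
      (auto simp: has_real_derivative_iff_has_vector_derivative has_vector_derivative_at_within)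
  then show ?thesis by simp
qed

section \<open>The exact flow of the EDH filter\<close>

locale edh_eigendecomposition =
  fixes P :: "real^'x^'x" and H :: "real^'x^'z" and R V :: "real^'z^'z" and \<alpha> :: "'z \<Rightarrow> real"
  assumes R: "pos_def_matrix R" and V: "orthogonal_matrix V"
    and eig: "matrix_inv (spd_sqrt R) ** H ** P ** transpose H ** matrix_inv (spd_sqrt R)
              = orth_diag V \<alpha>"
    and \<alpha>_pos: "\<And>i. \<alpha> i > 0"
begin

abbreviation R_isqrt :: "real^'z^'z" where "R_isqrt \<equiv> matrix_inv (spd_sqrt R)"
abbreviation edh_E :: "real^'z^'x" where "edh_E \<equiv> P ** transpose H ** R_isqrt ** V"
abbreviation edh_Ft :: "real^'x^'z" where "edh_Ft \<equiv> transpose V ** R_isqrt ** H"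

lemma sqrt_R_inverse: "spd_sqrt R ** R_isqrt = mat 1" "R_isqrt ** spd_sqrt R = mat 1"
  using pos_def_matrix_inverse[OF pos_def_spd_sqrt[OF R]] by simp_all

lemma edh_Ft_edh_E: "edh_Ft ** edh_E = diag_mat \<alpha>"
proof -
  have "edh_Ft ** edh_E = transpose V ** (R_isqrt ** H ** P ** transpose H ** R_isqrt) ** V"
    by (simp only: matrix_mul_assoc)
  also have "\<dots> = (transpose V ** V) ** diag_mat \<alpha> ** (transpose V ** V)"
    unfolding eig orth_diag_def by (simp only: matrix_mul_assoc)
  finally show ?thesis using V by (simp add: orthogonal_matrix_def)
qed

lemma one_plus_mult_alpha_pos: "\<mu> \<ge> 0 \<Longrightarrow> 1 + \<mu> * \<alpha> i > 0"
  using \<alpha>_pos[of i] by (simp add: add_pos_nonneg)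

lemma innovation_covariance_eq:
  "\<mu> *\<^sub>R (H ** P ** transpose H) + R = spd_sqrt R ** orth_diag V (\<lambda>i. 1 + \<mu> * \<alpha> i) ** spd_sqrt R"
proof -
  let ?S = "spd_sqrt R"
  have "H ** P ** transpose H = (?S ** R_isqrt) ** H ** P ** transpose H ** (R_isqrt ** ?S)"
    using sqrt_R_inverse by simp
  also have "\<dots> = ?S ** orth_diag V \<alpha> ** ?S"
    unfolding eig[symmetric] by (simp only: matrix_mul_assoc)
  finally have "\<mu> *\<^sub>R (H ** P ** transpose H) + R = ?S ** (\<mu> *\<^sub>R orth_diag V \<alpha> + mat 1) ** ?S"
    using spd_sqrt_mult_self[OF R]
    by (simp add: matrix_add_ldistrib matrix_add_rdistrib matrix_scaleR_right scalar_matrix_assoc)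
  also have "\<dots> = ?S ** orth_diag V (\<lambda>i. 1 + \<mu> * \<alpha> i) ** ?S"
    using V by (simp add: scaleR_orth_diag orth_diag_one[symmetric] orth_diag_add add.commute)
  finally show ?thesis .
qed

lemma inverse_innovation_covariance:
  assumes "\<And>i. 1 + \<mu> * \<alpha> i \<noteq> 0"
  shows "matrix_inv (\<mu> *\<^sub>R (H ** P ** transpose H) + R)
           = R_isqrt ** orth_diag V (\<lambda>i. 1 / (1 + \<mu> * \<alpha> i)) ** R_isqrt"
proof (rule matrix_inv_unique)
  let ?S = "spd_sqrt R" and ?C = "orth_diag V (\<lambda>i. 1 + \<mu> * \<alpha> i)"
    and ?C' = "orth_diag V (\<lambda>i. 1 / (1 + \<mu> * \<alpha> i))"
  have "?S ** ?C ** ?S ** (R_isqrt ** ?C' ** R_isqrt) = ?S ** (?C ** ((?S ** R_isqrt) ** ?C')) ** R_isqrt"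
    by (simp only: matrix_mul_assoc)
  also have "\<dots> = mat 1"
    using assms V sqrt_R_inverse by (simp add: orth_diag_mult orth_diag_one)
  finally show "(\<mu> *\<^sub>R (H ** P ** transpose H) + R) ** (R_isqrt ** ?C' ** R_isqrt) = mat 1"
    by (simp only: innovation_covariance_eq)
qed

lemma edh_A_eq:
  assumes "\<mu> \<ge> 0"
  shows "edh_A P H R \<mu> = edh_E ** diag_mat (\<lambda>i. - 1 / (2 * (1 + \<mu> * \<alpha> i))) ** edh_Ft"
proof -
  have "1 + \<mu> * \<alpha> i \<noteq> 0" for i
    using one_plus_mult_alpha_pos[OF assms, of i] by simp
  then have "edh_A P H R \<mu>
      = - (1 / 2) *\<^sub>R (edh_E ** diag_mat (\<lambda>i. 1 / (1 + \<mu> * \<alpha> i)) ** edh_Ft)"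
    by (simp add: edh_A_def inverse_innovation_covariance orth_diag_def matrix_mul_assoc)
  then show ?thesis by (simp add: scaleR_factored_diag_mat)
qed

lemma integral_edh_A:
  assumes "lam \<ge> 0"
  shows "integral {0..lam} (edh_A P H R)
           = edh_E ** diag_mat (\<lambda>i. - ln (1 + lam * \<alpha> i) / (2 * \<alpha> i)) ** edh_Ft"
proof (rule integral_unique)
  have "((\<lambda>\<mu>. edh_E ** diag_mat (\<lambda>i. - 1 / (2 * (1 + \<mu> * \<alpha> i))) ** edh_Ft) has_integral
      edh_E ** diag_mat (\<lambda>i. - ln (1 + lam * \<alpha> i) / (2 * \<alpha> i)) ** edh_Ft) {0..lam}"
    using assms \<alpha>_pos by (intro has_integral_factored_diag_mat has_integral_edh_coefficient)
  then show "(edh_A P H R has_integral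
      edh_E ** diag_mat (\<lambda>i. - ln (1 + lam * \<alpha> i) / (2 * \<alpha> i)) ** edh_Ft) {0..lam}"
    by (rule has_integral_eq[rotated]) (simp add: edh_A_eq)
qed

lemma edh_Phi_eq:
  assumes "lam \<ge> 0"
  shows "edh_Phi P H R lam = mat 1 + edh_E ** diag_mat (\<lambda>i. (1 / sqrt (1 + lam * \<alpha> i) - 1) / \<alpha> i) ** edh_Ft"
proof -
  have \<alpha>_nz: "\<alpha> i \<noteq> 0" for i using \<alpha>_pos[of i] by simp
  have exp_eq: "exp (- ln (1 + lam * \<alpha> i) / (2 * \<alpha> i) * \<alpha> i) = 1 / sqrt (1 + lam * \<alpha> i)" for i
  proof -
    have "1 + lam * \<alpha> i > 0" by (rule one_plus_mult_alpha_pos[OF assms])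
    then have "sqrt (1 + lam * \<alpha> i) = exp (ln (1 + lam * \<alpha> i) / 2)"
      by (simp add: powr_half_sqrt[symmetric] powr_def)
    then show ?thesis using \<alpha>_nz[of i] by (simp add: exp_minus inverse_eq_divide)
  qed
  show ?thesis
    unfolding edh_Phi_def integral_edh_A[OF assms] mat_exp_factored[OF edh_Ft_edh_E \<alpha>_nz] exp_eq ..
qed

lemma edh_Phi_eq_sqrt:
  assumes "lam \<ge> 0"
  shows "edh_Phi P H R lam
           = mat 1 + P ** transpose H ** R_isqrt ** (matrix_inv (spd_sqrt (mat 1 + lam *\<^sub>R orth_diag V \<alpha>)) - mat 1)
               ** matrix_inv (orth_diag V \<alpha>) ** R_isqrt ** H"
proof -
  have pos: "1 + lam * \<alpha> i > 0" for i by (rule one_plus_mult_alpha_pos[OF assms])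
  have "mat 1 + lam *\<^sub>R orth_diag V \<alpha> = orth_diag V (\<lambda>i. 1 + lam * \<alpha> i)"
    using V by (simp add: scaleR_orth_diag orth_diag_one[symmetric] orth_diag_add)
  then have key: "(matrix_inv (spd_sqrt (mat 1 + lam *\<^sub>R orth_diag V \<alpha>)) - mat 1) ** matrix_inv (orth_diag V \<alpha>)
      = orth_diag V (\<lambda>i. (1 / sqrt (1 + lam * \<alpha> i) - 1) / \<alpha> i)"
    using V pos \<alpha>_pos
    by (simp add: spd_sqrt_orth_diag matrix_inv_orth_diag orth_diag_one[symmetric] orth_diag_diff
        orth_diag_mult less_imp_neq[symmetric] divide_inverse)
  have "P ** transpose H ** R_isqrt ** (matrix_inv (spd_sqrt (mat 1 + lam *\<^sub>R orth_diag V \<alpha>)) - mat 1)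
        ** matrix_inv (orth_diag V \<alpha>) ** R_isqrt ** H
      = P ** transpose H ** R_isqrt ** ((matrix_inv (spd_sqrt (mat 1 + lam *\<^sub>R orth_diag V \<alpha>)) - mat 1)
        ** matrix_inv (orth_diag V \<alpha>)) ** R_isqrt ** H"
    by (simp only: matrix_mul_assoc)
  also have "\<dots> = edh_E ** diag_mat (\<lambda>i. (1 / sqrt (1 + lam * \<alpha> i) - 1) / \<alpha> i) ** edh_Ft"
    unfolding key by (simp only: orth_diag_def matrix_mul_assoc)
  finally show ?thesis using edh_Phi_eq[OF assms] by simp
qed

end

theorem mainTheorem2:
  fixes P :: "real^'x^'x" and R :: "real^'z^'z" and H :: "real^'x^'z"
    and D V :: "real^'z^'z" and \<alpha> :: "'z \<Rightarrow> real"
    and E :: "real^'z^'x" and Ft :: "real^'x^'z" and lam :: real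
  assumes P: "pos_def_matrix P" and R: "pos_def_matrix R"
    and H: "rank H = CARD('z)"
    and D: "D = matrix_inv (spd_sqrt R) ** H ** P ** transpose H ** matrix_inv (spd_sqrt R)"
    and V: "orthogonal_matrix V"
    and eig: "D = V ** diag_mat \<alpha> ** transpose V"
    and \<alpha>: "\<forall>i. \<alpha> i > 0"
    and E: "E = P ** transpose H ** matrix_inv (spd_sqrt R) ** V"
    and Ft: "Ft = transpose V ** matrix_inv (spd_sqrt R) ** H"
    and lam: "lam \<in> {0..1}"
  shows "edh_Phi P H R lam
           = mat 1 + P ** transpose H ** matrix_inv (spd_sqrt R)
               ** (matrix_inv (spd_sqrt (mat 1 + lam *\<^sub>R D)) - mat 1)
               ** matrix_inv D ** matrix_inv (spd_sqrt R) ** H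
         \<and> edh_Phi P H R lam
           = mat 1 + E ** diag_mat (\<lambda>i. (1 / sqrt (1 + lam * \<alpha> i) - 1) / \<alpha> i) ** Ft"
proof -
  \<comment> \<open>Only the eigen-decomposition of \<open>D\<close> with positive \<open>\<alpha>\<close> and \<open>lam \<ge> 0\<close> matter.\<close>
  have D_eq: "D = orth_diag V \<alpha>" by (simp add: eig orth_diag_def)
  interpret edh_eigendecomposition P H R V \<alpha>
    using R V \<alpha> by unfold_locales (simp_all add: D[symmetric] D_eq)
  have "lam \<ge> 0" using lam by simp
  then show ?thesis
    unfolding D_eq E Ft using edh_Phi_eq_sqrt edh_Phi_eq by simp
qed

end
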